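(* Let $A$ be a DFA and let $\tilde{A}$ be the DFA obtained from $A$ by the following minimization procedure: first remove all states not reachable from the initial state; then partition the remaining states into Myhill–Nerode classes (classes of indistinguishable states); then, for each class, repeatedly apply elementary merge operations merging two states of the class until each class is collapsed into a single state. If $A$ contains a single closed communicating class and this class is aperiodic, then $\tilde{A}$ also contains a single closed communicating class and this class is aperiodic.
   Context: An NFA is a tuple $A = \langle \Sigma, Q, q_0, \tau, \phi\rangle$ with finite alphabet $\Sigma$, finite state set $Q$, initial state $q_0$, transition function $\tau : Q \times \Sigma \to 2^Q$ and termination function $\phi : Q \to \{0,1\}$; $\tau$ extends to strings by $\tau(q,\lambda) = \{q\}$, $\tau(q, x\sigma) = \bigcup_{q' \in \tau(q,x)} \tau(q',\sigma)$, and to sets by $\tau(S, X) = \bigcup_{q\in S, x \in X}\tau(q,x)$; write $\tau_1(S) = \tau(S,\Sigma)$, $\tau_\star(S) = \tau(S,\Sigma^\star)$. A DFA is an NFA with $|\tau(q,\sigma)| = 1$ for all $q,\sigma$. The language of $A$ is the set of strings $x$ such that $\phi(q) = 1$ for some $q \in \tau(q_0,x)$; two states $q,q'$ are indistinguishable if the NFAs obtained from $A$ by making $q$, resp. $q'$, the initial state accept the same language. A state $q'$ is reachable if $q' \in \tau_\star(q_0)$. States $q,q'$ communicate if $q' \in \tau_\star(q)$ and $q \in \tau_\star(q')$; the equivalence classes are communicating classes, and a class $Q'$ is closed if $\tau_\star(Q') = Q'$. For $k>1$ a closed communicating class $Q'$ is $k$-periodic if it has a partition into $k$ parts $Q'_0,\ldots,Q'_{k-1}$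 with $\tau_1(Q'_i) = Q'_{(i+1)\bmod k}$ for all $i$; it is aperiodic if it is not $k$-periodic for any $k>1$. Given NFAs $A$ and $\tilde{A} = \langle \Sigma, \tilde{Q}, \tilde{q}_0, \tilde{\tau}, \tilde{\phi}\rangle$, $\tilde{A}$ is obtained from $A$ by a merge operation $\Psi : Q \to \tilde{Q}$ if $\Psi$ is surjective, $\Psi(q_0) = \tilde{q}_0$, $\phi(q) = \tilde{\phi}(\Psi(q))$ for all $q$, and $q' \in \tau(q,\sigma)$ implies $\Psi(q') \in \tilde{\tau}(\Psi(q),\sigma)$. The merge is elementary if $|\tilde{Q}| = |Q| - 1$ (exactly two states are identified). *)

theory Defs
  imports Main
begin

record ('q, 'a) nfa =
  alph   :: "'a set"
  states :: "'q set"
  init   :: "'q"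
  trans  :: "'q \<Rightarrow> 'a \<Rightarrow> 'q set"
  final  :: "'q \<Rightarrow> bool"

definition nfa_wf :: "('q, 'a) nfa \<Rightarrow> bool" where
  "nfa_wf A \<longleftrightarrow> finite (alph A) \<and> finite (states A) \<and> init A \<in> states A \<and>
     (\<forall>q\<in>states A. \<forall>a\<in>alph A. trans A q a \<subseteq> states A)"

definition is_dfa :: "('q, 'a) nfa \<Rightarrow> bool" where
  "is_dfa A \<longleftrightarrow> nfa_wf A \<and> (\<forall>q\<in>states A. \<forall>a\<in>alph A. card (trans A q a) = 1)"

fun steps :: "('q, 'a) nfa \<Rightarrow> 'q set \<Rightarrow> 'a list \<Rightarrow> 'q set" where
  "steps A S [] = S"
| "steps A S (x # xs) = steps A (\<Union>q\<in>S. trans A q x) xs"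

definition tau1 :: "('q, 'a) nfa \<Rightarrow> 'q set \<Rightarrow> 'q set" where
  "tau1 A S = (\<Union>q\<in>S. \<Union>a\<in>alph A. trans A q a)"

definition tau_star :: "('q, 'a) nfa \<Rightarrow> 'q set \<Rightarrow> 'q set" where
  "tau_star A S = (\<Union>xs\<in>lists (alph A). steps A S xs)"

definition lang_from :: "('q, 'a) nfa \<Rightarrow> 'q \<Rightarrow> 'a list set" where
  "lang_from A q = {xs \<in> lists (alph A). \<exists>p\<in>steps A {q} xs. final A p}"

definition indist :: "('q, 'a) nfa \<Rightarrow> 'q \<Rightarrow> 'q \<Rightarrow> bool" where
  "indist A q q' \<longleftrightarrow> lang_from A q = lang_from A q'"

definition reachable_states :: "('q, 'a) nfa \<Rightarrow> 'q set" where
  "reachable_states A = tau_star A {init A}"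

definition restrict_reachable :: "('q, 'a) nfa \<Rightarrow> ('q, 'a) nfa" where
  "restrict_reachable A = A\<lparr>states := reachable_states A\<rparr>"

definition communicate :: "('q, 'a) nfa \<Rightarrow> 'q \<Rightarrow> 'q \<Rightarrow> bool" where
  "communicate A q q' \<longleftrightarrow> q' \<in> tau_star A {q} \<and> q \<in> tau_star A {q'}"

definition comm_class :: "('q, 'a) nfa \<Rightarrow> 'q set \<Rightarrow> bool" where
  "comm_class A C \<longleftrightarrow> (\<exists>q\<in>states A. C = {q'\<in>states A. communicate A q q'})"

definition closed_comm_class :: "('q, 'a) nfa \<Rightarrow> 'q set \<Rightarrow> bool" where
  "closed_comm_class A C \<longleftrightarrow> comm_class A C \<and> tau_star A C = C"

definition periodic :: "('q, 'a) nfa \<Rightarrow> nat \<Rightarrow> 'q set \<Rightarrow> bool" where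
  "periodic A k C \<longleftrightarrow> closed_comm_class A C \<and> k > 1 \<and>
     (\<exists>P :: nat \<Rightarrow> 'q set.
        (\<Union>i<k. P i) = C \<and>
        (\<forall>i<k. P i \<noteq> {}) \<and>
        (\<forall>i<k. \<forall>j<k. i \<noteq> j \<longrightarrow> P i \<inter> P j = {}) \<and>
        (\<forall>i<k. tau1 A (P i) = P ((i + 1) mod k)))"

definition aperiodic :: "('q, 'a) nfa \<Rightarrow> 'q set \<Rightarrow> bool" where
  "aperiodic A C \<longleftrightarrow> closed_comm_class A C \<and> \<not> (\<exists>k>1. periodic A k C)"

definition single_aperiodic_closed_class :: "('q, 'a) nfa \<Rightarrow> bool" where
  "single_aperiodic_closed_class A \<longleftrightarrow>
     (\<exists>!C. closed_comm_class A C) \<and> (\<forall>C. closed_comm_class A C \<longrightarrow> aperiodic A C)"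

definition merge_op :: "('q, 'a) nfa \<Rightarrow> ('p, 'a) nfa \<Rightarrow> ('q \<Rightarrow> 'p) \<Rightarrow> bool" where
  "merge_op A B \<Psi> \<longleftrightarrow> alph B = alph A \<and> \<Psi> ` states A = states B \<and> \<Psi> (init A) = init B \<and>
     (\<forall>q\<in>states A. final A q = final B (\<Psi> q)) \<and>
     (\<forall>q\<in>states A. \<forall>a\<in>alph A. \<forall>q'\<in>trans A q a. \<Psi> q' \<in> trans B (\<Psi> q) a)"

end

theory Submission
  imports Defs
begin

text \<open>Between complete DFAs, a merge \<open>\<Psi>\<close> commutes with reachability: the states reachable
  from \<open>\<Psi> q\<close> are exactly the images of those reachable from \<open>q\<close>. Hence \<open>\<Psi>\<close> maps the unique
  closed class \<open>C\<close> onto a closed class; since every state reaches \<open>C\<close>, every state of the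
  quotient reaches \<open>\<Psi> ` C\<close>, which is therefore the only closed class. A cyclic partition of
  \<open>\<Psi> ` C\<close> pulls back along \<open>\<Psi>\<close> to a cyclic partition of \<open>C\<close>, so aperiodicity is inherited.
  Removing unreachable states keeps \<open>C\<close> for the same reason.\<close>

lemma steps_mono: "S \<subseteq> T \<Longrightarrow> steps X S xs \<subseteq> steps X T xs"
proof (induction xs arbitrary: S T)
  case (Cons x xs)
  then have "(\<Union>q\<in>S. trans X q x) \<subseteq> (\<Union>q\<in>T. trans X q x)" by blast
  then show ?case using Cons.IH by simp
qed simp

lemma steps_append: "steps X S (xs @ ys) = steps X (steps X S xs) ys"
  by (induction xs arbitrary: S) auto

lemma steps_UN: "steps X S xs = (\<Union>q\<in>S. steps X {q} xs)"
proof (induction xs arbitrary: S)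
  case (Cons x xs)
  have "steps X S (x # xs) = (\<Union>r\<in>(\<Union>q\<in>S. trans X q x). steps X {r} xs)"
    by (simp only: steps.simps(2)) (rule Cons.IH)
  also have "\<dots> = (\<Union>q\<in>S. steps X {q} (x # xs))"
    by (simp add: Cons.IH[of "trans X _ x"])
  finally show ?case .
qed simp

lemma steps_states_update [simp]: "steps (X\<lparr>states := T\<rparr>) = steps X"
proof (intro ext)
  show "steps (X\<lparr>states := T\<rparr>) S xs = steps X S xs" for S xs
    by (induction xs arbitrary: S) simp_all
qed

lemma tau_star_states_update [simp]: "tau_star (X\<lparr>states := T\<rparr>) = tau_star X"
  by (simp add: tau_star_def fun_eq_iff)

lemma tau1_states_update [simp]: "tau1 (X\<lparr>states := T\<rparr>) = tau1 X"
  by (simp add: tau1_def fun_eq_iff)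

lemma subset_tau_star: "S \<subseteq> tau_star X S"
  unfolding tau_star_def by (metis UN_upper lists.Nil steps.simps(1))

lemma tau_star_mono: "S \<subseteq> T \<Longrightarrow> tau_star X S \<subseteq> tau_star X T"
  unfolding tau_star_def using steps_mono by (metis SUP_mono)

lemma tau_star_idem [simp]: "tau_star X (tau_star X S) = tau_star X S"
proof
  show "tau_star X (tau_star X S) \<subseteq> tau_star X S"
  proof
    fix x assume "x \<in> tau_star X (tau_star X S)"
    then obtain ys where ys: "ys \<in> lists (alph X)" "x \<in> steps X (tau_star X S) ys"
      unfolding tau_star_def by blast
    then obtain q where q: "q \<in> tau_star X S" "x \<in> steps X {q} ys"
      using steps_UN[of X "tau_star X S" ys] by blast
    then obtain xs where xs: "xs \<in> lists (alph X)" "q \<in> steps X S xs"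
      unfolding tau_star_def by blast
    have "x \<in> steps X S (xs @ ys)"
      using steps_mono[of "{q}" "steps X S xs"] q(2) xs(2) unfolding steps_append by blast
    moreover have "xs @ ys \<in> lists (alph X)" using xs(1) ys(1) by simp
    ultimately show "x \<in> tau_star X S" unfolding tau_star_def by blast
  qed
qed (rule subset_tau_star)

lemma tau_star_subset: "x \<in> tau_star X S \<Longrightarrow> tau_star X {x} \<subseteq> tau_star X S"
  using tau_star_mono[of "{x}" "tau_star X S" X] by simp

lemma tau1_subset_tau_star: "tau1 X S \<subseteq> tau_star X S"
proof
  fix x assume "x \<in> tau1 X S"
  then obtain q a where "q \<in> S" "a \<in> alph X" "x \<in> trans X q a" unfolding tau1_def by blast
  then have "x \<in> steps X S [a]" "[a] \<in> lists (alph X)" by auto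
  then show "x \<in> tau_star X S" unfolding tau_star_def by blast
qed

lemma tau1_mono: "S \<subseteq> T \<Longrightarrow> tau1 X S \<subseteq> tau1 X T"
  unfolding tau1_def by blast

lemma tau_star_least:
  assumes "S \<subseteq> T" "tau1 X T \<subseteq> T"
  shows "tau_star X S \<subseteq> T"
proof -
  have "xs \<in> lists (alph X) \<Longrightarrow> S \<subseteq> T \<Longrightarrow> steps X S xs \<subseteq> T" for xs S
  proof (induction xs arbitrary: S)
    case (Cons x xs)
    have "x \<in> alph X" using Cons.prems(1) by simp
    then have "(\<Union>q\<in>S. trans X q x) \<subseteq> tau1 X T" using Cons.prems(2) unfolding tau1_def by blast
    then show ?case using Cons assms(2) by simp
  qed simp
  then show ?thesis using assms(1) unfolding tau_star_def by blast
qed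

lemma tau_star_subset_states:
  assumes "nfa_wf X" "S \<subseteq> states X"
  shows "tau_star X S \<subseteq> states X"
  using assms by (intro tau_star_least) (auto simp: nfa_wf_def tau1_def)

lemma tau_star_cases:
  assumes "q \<in> tau_star X S"
  shows "q \<in> S \<or> (\<exists>r\<in>tau_star X S. q \<in> tau1 X {r})"
proof -
  obtain xs where xs: "xs \<in> lists (alph X)" "q \<in> steps X S xs"
    using assms unfolding tau_star_def by blast
  show ?thesis
  proof (cases xs rule: rev_exhaust)
    case (snoc ys y)
    then obtain r where r: "r \<in> steps X S ys" "q \<in> trans X r y"
      using xs(2) by (auto simp: steps_append)
    have "ys \<in> lists (alph X)" "y \<in> alph X" using xs snoc by auto
    then show ?thesis using r unfolding tau_star_def tau1_def by blast
  qed (use xs in simp)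
qed

lemma closed_comm_class_eq_tau_star:
  assumes "closed_comm_class X D" "x \<in> D"
  shows "D = tau_star X {x}"
proof -
  obtain q where q: "D = {q'\<in>states X. communicate X q q'}" and cl: "tau_star X D = D"
    using assms(1) unfolding closed_comm_class_def comm_class_def by blast
  have "tau_star X {x} \<subseteq> D" using tau_star_mono[of "{x}" D X] assms(2) cl by auto
  moreover have "q \<in> tau_star X {x}" using assms(2) q unfolding communicate_def by blast
  then have "D \<subseteq> tau_star X {x}"
    using q tau_star_subset[of q X "{x}"] unfolding communicate_def by blast
  ultimately show ?thesis by blast
qed

lemma closed_comm_class_subset_states: "closed_comm_class X D \<Longrightarrow> D \<subseteq> states X"
  unfolding closed_comm_class_def comm_class_def by blast

lemma closed_comm_class_nonempty: "closed_comm_class X D \<Longrightarrow> D \<noteq> {}"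
  unfolding closed_comm_class_def comm_class_def communicate_def
  using subset_tau_star by fastforce

lemma closed_comm_class_eqI:
  "closed_comm_class X D \<Longrightarrow> closed_comm_class X D' \<Longrightarrow> x \<in> D \<Longrightarrow> x \<in> D' \<Longrightarrow> D = D'"
  using closed_comm_class_eq_tau_star by metis

lemma closed_comm_class_tau_star:
  assumes "nfa_wf X" "q \<in> states X" "\<forall>y\<in>tau_star X {q}. q \<in> tau_star X {y}"
  shows "closed_comm_class X (tau_star X {q})"
proof -
  have "tau_star X {q} \<subseteq> states X" using tau_star_subset_states[OF assms(1)] assms(2) by simp
  then have "tau_star X {q} = {q'\<in>states X. communicate X q q'}"
    using assms(3) unfolding communicate_def by blast
  then have "comm_class X (tau_star X {q})" using assms(2) unfolding comm_class_def by blast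
  then show ?thesis unfolding closed_comm_class_def by simp
qed

text \<open>A state whose reachable set has minimal cardinality generates a closed class.\<close>
lemma closed_comm_class_reachable:
  assumes "nfa_wf X" "q0 \<in> states X"
  obtains q1 where "q1 \<in> tau_star X {q0}" "closed_comm_class X (tau_star X {q1})"
proof -
  have reach: "tau_star X {q0} \<subseteq> states X" using tau_star_subset_states[OF assms(1)] assms(2) by simp
  then have fin: "finite (tau_star X {q0})" using assms(1) finite_subset unfolding nfa_wf_def by blast
  have "q0 \<in> tau_star X {q0}" using subset_tau_star[of "{q0}" X] by simp
  then obtain q1 where q1: "q1 \<in> tau_star X {q0}"
    and min: "\<forall>y. y \<in> tau_star X {q0} \<longrightarrow> card (tau_star X {q1}) \<le> card (tau_star X {y})"
    using ex_has_least_nat[of "\<lambda>y. y \<in> tau_star X {q0}" q0 "\<lambda>y. card (tau_star X {y})"] by blast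
  have sub1: "tau_star X {q1} \<subseteq> tau_star X {q0}" using q1 by (rule tau_star_subset)
  have "q1 \<in> tau_star X {y}" if y: "y \<in> tau_star X {q1}" for y
  proof -
    have "y \<in> tau_star X {q0}" using sub1 y by (rule subsetD)
    then have "tau_star X {y} = tau_star X {q1}"
      using card_seteq[OF finite_subset[OF sub1 fin] tau_star_subset[OF y]] min by simp
    then show ?thesis using subset_tau_star[of "{q1}" X] by simp
  qed
  moreover have "q1 \<in> states X" using reach q1 by (rule subsetD)
  ultimately show ?thesis using that[OF q1] closed_comm_class_tau_star[OF assms(1)] by simp
qed

lemma closed_comm_class_iff:
  assumes "nfa_wf X"
  shows "closed_comm_class X D \<longleftrightarrow>
    (\<exists>q\<in>states X. (\<forall>y\<in>tau_star X {q}. q \<in> tau_star X {y}) \<and> D = tau_star X {q})"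
proof
  assume D: "closed_comm_class X D"
  then obtain q where q: "q \<in> D" using closed_comm_class_nonempty by blast
  moreover have "D \<subseteq> states X" using D by (rule closed_comm_class_subset_states)
  moreover have "q \<in> tau_star X {y}" if "y \<in> D" for y
    using q closed_comm_class_eq_tau_star[OF D that] by blast
  ultimately show "\<exists>q\<in>states X. (\<forall>y\<in>tau_star X {q}. q \<in> tau_star X {y}) \<and> D = tau_star X {q}"
    using closed_comm_class_eq_tau_star[OF D q] by blast
qed (use closed_comm_class_tau_star[OF assms] in blast)

lemma unique_closed_comm_class_subset_tau_star:
  assumes "nfa_wf X" "q \<in> states X" "\<And>D. closed_comm_class X D \<Longrightarrow> D = C"
  shows "C \<subseteq> tau_star X {q}"
proof -
  obtain q1 where "q1 \<in> tau_star X {q}" "closed_comm_class X (tau_star X {q1})"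
    using closed_comm_class_reachable[OF assms(1,2)] .
  then show ?thesis using assms(3) tau_star_subset by metis
qed

lemma periodic_of_cyclic_cover:
  fixes Q :: "nat \<Rightarrow> 'q set"
  assumes C: "closed_comm_class X C" and k: "k > 1"
    and cover: "(\<Union>i<k. Q i) = C" and nonempty: "\<forall>i<k. Q i \<noteq> {}"
    and disjoint: "\<forall>i<k. \<forall>j<k. i \<noteq> j \<longrightarrow> Q i \<inter> Q j = {}"
    and step: "\<And>i. i < k \<Longrightarrow> tau1 X (Q i) \<subseteq> Q ((i + 1) mod k)"
  shows "periodic X k C"
proof -
  have in_one_part: "i = j" if "i < k" "j < k" "r \<in> Q i" "r \<in> Q j" for i j r
    using disjoint that by blast
  have onto: "Q ((i + 1) mod k) \<subseteq> tau1 X (Q i)" if i: "i < k" for i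
  proof
    fix r assume r: "r \<in> Q ((i + 1) mod k)"
    have "(i + 1) mod k < k" using k by simp
    then have rC: "r \<in> C" using r cover by blast
    \<comment> \<open>\<open>C\<close> has at least two parts, so \<open>r\<close> is reached from another state of \<open>C\<close> by a nonempty
      word and thus has a predecessor in \<open>C\<close>.\<close>
    obtain s where s: "s \<in> C" "s \<noteq> r"
    proof -
      obtain a b where ab: "a \<in> Q 0" "b \<in> Q 1"
        using nonempty k by (metis all_not_in_conv less_trans zero_less_one)
      then have "a \<in> C" "b \<in> C" using cover k by auto
      moreover have "a \<noteq> b" using in_one_part[of 0 1 a] ab k by auto
      ultimately show ?thesis using that by blast
    qed
    have "r \<in> tau_star X {s}" using rC closed_comm_class_eq_tau_star[OF C s(1)] by simp
    then obtain t where t: "t \<in> tau_star X {s}" "r \<in> tau1 X {t}"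
      using tau_star_cases[of r X "{s}"] s(2) by blast
    then obtain j where j: "j < k" "t \<in> Q j"
      using cover closed_comm_class_eq_tau_star[OF C s(1)] by blast
    have rj: "r \<in> tau1 X (Q j)" using tau1_mono[of "{t}" "Q j" X] j(2) t(2) by blast
    then have "r \<in> Q ((j + 1) mod k)" using step[OF j(1)] by blast
    moreover have "(j + 1) mod k < k" "(i + 1) mod k < k" using k by simp_all
    ultimately have "(j + 1) mod k = (i + 1) mod k" using in_one_part r by blast
    then have "j = i" using i j(1) by (auto simp: mod_Suc split: if_splits)
    then show "r \<in> tau1 X (Q i)" using rj by simp
  qed
  have "\<forall>i<k. tau1 X (Q i) = Q ((i + 1) mod k)"
    using step onto by (blast intro: subset_antisym)
  then show ?thesis
    unfolding periodic_def by (intro conjI exI[of _ Q] C k cover nonempty disjoint)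
qed

locale dfa_merge =
  fixes X :: "('q, 'a) nfa" and B :: "('p, 'a) nfa" and \<Psi> :: "'q \<Rightarrow> 'p"
  assumes dfa_X: "is_dfa X" and dfa_B: "is_dfa B" and merge: "merge_op X B \<Psi>"
begin

lemma wf_X: "nfa_wf X" and wf_B: "nfa_wf B"
  using dfa_X dfa_B unfolding is_dfa_def by blast+

lemma alph_B [simp]: "alph B = alph X" and states_B: "states B = \<Psi> ` states X"
  using merge unfolding merge_op_def by blast+

lemma trans_image:
  assumes "q \<in> states X" "a \<in> alph X"
  shows "trans B (\<Psi> q) a = \<Psi> ` trans X q a"
proof -
  obtain r where r: "trans X q a = {r}"
    using dfa_X assms unfolding is_dfa_def by (metis card_1_singletonE)
  have "\<Psi> r \<in> trans B (\<Psi> q) a" using merge assms r unfolding merge_op_def by blast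
  moreover have "card (trans B (\<Psi> q) a) = 1"
    using dfa_B assms states_B unfolding is_dfa_def by auto
  ultimately show ?thesis using r by (metis card_1_singletonE image_empty image_insert singletonD)
qed

lemma tau1_image:
  assumes "S \<subseteq> states X"
  shows "tau1 B (\<Psi> ` S) = \<Psi> ` tau1 X S"
proof -
  have "(\<Union>q\<in>S. \<Union>a\<in>alph X. trans B (\<Psi> q) a) = (\<Union>q\<in>S. \<Union>a\<in>alph X. \<Psi> ` trans X q a)"
    using assms trans_image by (intro SUP_cong) auto
  then show ?thesis unfolding tau1_def by (simp add: image_UN)
qed

lemma steps_image:
  assumes "S \<subseteq> states X" "xs \<in> lists (alph X)"
  shows "steps B (\<Psi> ` S) xs = \<Psi> ` steps X S xs"
  using assms
proof (induction xs arbitrary: S)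
  case (Cons x xs)
  have x: "x \<in> alph X" using Cons.prems(2) by simp
  have "(\<Union>q\<in>\<Psi> ` S. trans B q x) = (\<Union>q\<in>S. trans B (\<Psi> q) x)" by auto
  also have "\<dots> = (\<Union>q\<in>S. \<Psi> ` trans X q x)"
    using Cons.prems(1) x by (intro SUP_cong refl trans_image) auto
  finally have "(\<Union>q\<in>\<Psi> ` S. trans B q x) = \<Psi> ` (\<Union>q\<in>S. trans X q x)" by (simp add: image_UN)
  moreover have "(\<Union>q\<in>S. trans X q x) \<subseteq> states X"
    using Cons.prems(1) x wf_X unfolding nfa_wf_def by blast
  ultimately show ?case using Cons by simp
qed simp

lemma tau_star_image:
  assumes "S \<subseteq> states X"
  shows "tau_star B (\<Psi> ` S) = \<Psi> ` tau_star X S"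
  using steps_image[OF assms] unfolding tau_star_def by auto

lemma closed_comm_class_image:
  assumes C: "closed_comm_class X C"
  shows "closed_comm_class B (\<Psi> ` C)"
proof -
  have CX: "C \<subseteq> states X" using C by (rule closed_comm_class_subset_states)
  obtain q where q: "q \<in> C" using closed_comm_class_nonempty[OF C] by blast
  have image: "\<Psi> ` C = tau_star B {\<Psi> r}" if "r \<in> C" for r
    using closed_comm_class_eq_tau_star[OF C that] tau_star_image[of "{r}"] that CX by auto
  have "\<Psi> q \<in> tau_star B {y}" if "y \<in> \<Psi> ` C" for y
    using that image q by blast
  then show ?thesis
    using closed_comm_class_tau_star[OF wf_B] image[OF q] q CX states_B by auto
qed

lemma periodic_preimage:
  assumes C: "closed_comm_class X C" and per: "periodic B k (\<Psi> ` C)"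
  shows "periodic X k C"
proof -
  obtain P :: "nat \<Rightarrow> 'p set" where k: "k > 1" and cover: "(\<Union>i<k. P i) = \<Psi> ` C"
    and nonempty: "\<forall>i<k. P i \<noteq> {}" and disjoint: "\<forall>i<k. \<forall>j<k. i \<noteq> j \<longrightarrow> P i \<inter> P j = {}"
    and step: "\<forall>i<k. tau1 B (P i) = P ((i + 1) mod k)"
    using per unfolding periodic_def by blast
  define Q where "Q i = C \<inter> \<Psi> -` P i" for i
  have CX: "C \<subseteq> states X" using C by (rule closed_comm_class_subset_states)
  have C_closed: "tau1 X C \<subseteq> C"
    using tau1_subset_tau_star[of X C] C unfolding closed_comm_class_def by simp
  have "tau1 X (Q i) \<subseteq> Q ((i + 1) mod k)" if i: "i < k" for i
  proof
    fix x assume x: "x \<in> tau1 X (Q i)"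
    have QC: "Q i \<subseteq> C" unfolding Q_def by blast
    then have "x \<in> C" using x tau1_mono[OF QC] C_closed by blast
    moreover have "\<Psi> x \<in> tau1 B (\<Psi> ` Q i)" using x tau1_image QC CX by blast
    then have "\<Psi> x \<in> tau1 B (P i)" using tau1_mono[of "\<Psi> ` Q i" "P i" B] unfolding Q_def by blast
    ultimately show "x \<in> Q ((i + 1) mod k)" using step i unfolding Q_def by simp
  qed
  moreover have "(\<Union>i<k. Q i) = C" using cover unfolding Q_def by blast
  moreover have "\<forall>i<k. Q i \<noteq> {}"
  proof (intro allI impI)
    fix i assume i: "i < k"
    then obtain p where "p \<in> P i" using nonempty by blast
    then have "p \<in> \<Psi> ` C" using cover i by blast
    then show "Q i \<noteq> {}" using \<open>p \<in> P i\<close> unfolding Q_def by blast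
  qed
  moreover have "\<forall>i<k. \<forall>j<k. i \<noteq> j \<longrightarrow> Q i \<inter> Q j = {}" using disjoint unfolding Q_def by blast
  ultimately show ?thesis using periodic_of_cyclic_cover[OF C k] by blast
qed

theorem single_aperiodic_closed_class_preserved:
  assumes X: "single_aperiodic_closed_class X"
  shows "single_aperiodic_closed_class B"
proof -
  obtain C where C: "closed_comm_class X C" and aper: "aperiodic X C"
    and unique: "\<And>C'. closed_comm_class X C' \<Longrightarrow> C' = C"
    using X unfolding single_aperiodic_closed_class_def by blast
  have D: "closed_comm_class B (\<Psi> ` C)" using closed_comm_class_image[OF C] .
  have "D' = \<Psi> ` C" if D': "closed_comm_class B D'" for D'
  proof -
    obtain p where p: "p \<in> D'" using closed_comm_class_nonempty[OF D'] by blast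
    moreover have "D' \<subseteq> \<Psi> ` states X"
      using closed_comm_class_subset_states[OF D'] states_B by simp
    ultimately obtain q where q: "q \<in> states X" "\<Psi> q \<in> D'" by blast
    have "\<Psi> ` C \<subseteq> D'"
      using unique_closed_comm_class_subset_tau_star[OF wf_X q(1) unique] tau_star_image[of "{q}"]
        closed_comm_class_eq_tau_star[OF D' q(2)] q(1) by auto
    then show ?thesis
      using closed_comm_class_eqI[OF D' D] closed_comm_class_nonempty[OF C] by blast
  qed
  moreover have "aperiodic B (\<Psi> ` C)"
    using D aper periodic_preimage[OF C] unfolding aperiodic_def by blast
  ultimately show ?thesis using D unfolding single_aperiodic_closed_class_def by metis
qed

end

lemma reachable_states_subset:
  assumes "nfa_wf A"
  shows "reachable_states A \<subseteq> states A"
  using tau_star_subset_states[OF assms] assms unfolding reachable_states_def nfa_wf_def by blast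

lemma nfa_wf_restrict_reachable:
  assumes "nfa_wf A"
  shows "nfa_wf (restrict_reachable A)"
proof -
  have "trans A q a \<subseteq> reachable_states A" if "q \<in> reachable_states A" "a \<in> alph A" for q a
    using that tau1_subset_tau_star[of A "reachable_states A"]
    unfolding reachable_states_def tau1_def by auto
  then show ?thesis
    using assms reachable_states_subset[OF assms] finite_subset subset_tau_star[of "{init A}" A]
    unfolding nfa_wf_def restrict_reachable_def reachable_states_def by auto
qed

lemma is_dfa_restrict_reachable:
  assumes "is_dfa A"
  shows "is_dfa (restrict_reachable A)"
proof -
  have wf: "nfa_wf A" using assms unfolding is_dfa_def by blast
  then show ?thesis
    using assms nfa_wf_restrict_reachable[OF wf] reachable_states_subset[OF wf]
    unfolding is_dfa_def by (auto simp: restrict_reachable_def)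
qed

lemma closed_comm_class_restrict_reachable:
  assumes "nfa_wf A"
  shows "closed_comm_class (restrict_reachable A) D \<longleftrightarrow>
    closed_comm_class A D \<and> D \<subseteq> reachable_states A"
proof -
  have "q \<in> reachable_states A \<longleftrightarrow> q \<in> states A \<and> tau_star A {q} \<subseteq> reachable_states A" for q
    using reachable_states_subset[OF assms] subset_tau_star[of "{q}" A] tau_star_subset[of q A]
    unfolding reachable_states_def by blast
  then show ?thesis
    unfolding closed_comm_class_iff[OF assms] closed_comm_class_iff[OF nfa_wf_restrict_reachable[OF assms]]
    by (auto simp: restrict_reachable_def)
qed

lemma single_aperiodic_closed_class_restrict_reachable:
  assumes wf: "nfa_wf A" and A: "single_aperiodic_closed_class A"
  shows "single_aperiodic_closed_class (restrict_reachable A)"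
proof -
  obtain C where C: "closed_comm_class A C" "aperiodic A C"
    and unique: "\<And>C'. closed_comm_class A C' \<Longrightarrow> C' = C"
    using A unfolding single_aperiodic_closed_class_def by blast
  have "C \<subseteq> reachable_states A"
    using unique_closed_comm_class_subset_tau_star[OF wf _ unique] wf
    unfolding reachable_states_def nfa_wf_def by blast
  then have classes: "closed_comm_class (restrict_reachable A) D \<longleftrightarrow> D = C" for D
    using closed_comm_class_restrict_reachable[OF wf] C(1) unique by blast
  then have "periodic (restrict_reachable A) k C \<longleftrightarrow> periodic A k C" for k
    using C(1) unfolding periodic_def restrict_reachable_def by simp
  then show ?thesis
    using C(2) classes unfolding single_aperiodic_closed_class_def aperiodic_def by auto
qed

theorem theorem4:
  fixes A :: "('q, 'a) nfa" and B :: "('p, 'a) nfa" and \<Psi> :: "'q \<Rightarrow> 'p"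
  assumes "is_dfa A"
    and "is_dfa B"
    and "merge_op (restrict_reachable A) B \<Psi>"
    and "\<forall>q\<in>reachable_states A. \<forall>q'\<in>reachable_states A. \<Psi> q = \<Psi> q' \<longleftrightarrow> indist A q q'"
    and "single_aperiodic_closed_class A"
  shows "single_aperiodic_closed_class B"
proof -
  interpret dfa_merge "restrict_reachable A" B \<Psi>
    by (rule dfa_merge.intro[OF is_dfa_restrict_reachable[OF assms(1)] assms(2,3)])
  have "nfa_wf A" using assms(1) unfolding is_dfa_def by blast
  then have "single_aperiodic_closed_class (restrict_reachable A)"
    using assms(5) by (rule single_aperiodic_closed_class_restrict_reachable)
  then show ?thesis by (rule single_aperiodic_closed_class_preserved)
qed

end
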